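(* Assume $f$ is twice continuously differentiable on $(0,\infty)$. Define $S$ on probability vectors $q$ on $\hat{\mathcal X}$ implicitly by $$S[q](i)=q(i)\sum_x\frac{p(x)A_q(x,i)}{\sum_kq(k)A_q(x,k)},\qquad A_q(x,i)=\exp\{-s_1d(x,i)-s_2g(p,S[q],i)\},$$ with $g(p,r,i)=f\big(\tfrac{p(i)}{r(i)}\big)-\tfrac{p(i)}{r(i)}f'\big(\tfrac{p(i)}{r(i)}\big)$. Let $q^*$ be a fixed point of $S$ achieving the RDPF, and let $A=A_{q^*}$. Let $J(q^* )$ be the Jacobian matrix of $S$ at $q^*$, with entries $J_{ij}=\partial S[q](i)/\partial q(j)$. Then $$J(q^* )=(I-M)(I-\Gamma J(q^* )),$$ where $$M_{ij}=q^*(i)\sum_xp(x)\frac{A(x,i)A(x,j)}{\big(\sum_kq^*(k)A(x,k)\big)^2},\qquad \Gamma=s_2\,\mathrm{diag}\Big[q^*(i)\frac{\partial^2}{\partial q(i)^2}D_f(p\|q)\Big|_{q=q^*}\Big]_i.$$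
   Context: Finite alphabets $\mathcal X=\hat{\mathcal X}$. The source distribution is $p$, $d\ge0$ is a distortion, and $s_1,s_2\ge0$ are multipliers. $f:(0,\infty)\to\mathbb R$ is convex with $f(1)=0$, and $D_f(p\|q)=\sum_xq(x)f(p(x)/q(x))$. $S$ is the update map of the exact alternating minimization iteration $q^{(n+1)}=S[q^{(n)}]$ for the rate-distortion-perception problem $\min_QI(p,Q)$ subject to $\mathbb E[d]\le D$ and $D_f(p\|q_Q)\le P$. *)

theory Defs
  imports "HOL-Analysis.Analysis"
begin

definition Df :: "(real \<Rightarrow> real) \<Rightarrow> ('a::finite \<Rightarrow> real) \<Rightarrow> ('a \<Rightarrow> real) \<Rightarrow> real" where
  "Df f p q = (\<Sum>x\<in>UNIV. q x * f (p x / q x))"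

definition gfun :: "(real \<Rightarrow> real) \<Rightarrow> ('a \<Rightarrow> real) \<Rightarrow> ('a \<Rightarrow> real) \<Rightarrow> 'a \<Rightarrow> real" where
  "gfun f p r i = f (p i / r i) - p i / r i * deriv f (p i / r i)"

text \<open>A(x,i) = exp(-s1 d(x,i) - s2 g(p,r,i)) where r = S[q].\<close>
definition Afun :: "(real \<Rightarrow> real) \<Rightarrow> ('a \<Rightarrow> real) \<Rightarrow> ('a \<Rightarrow> 'a \<Rightarrow> real) \<Rightarrow> real \<Rightarrow> real
    \<Rightarrow> ('a \<Rightarrow> real) \<Rightarrow> 'a \<Rightarrow> 'a \<Rightarrow> real" where
  "Afun f p d s1 s2 r x i = exp (- s1 * d x i - s2 * gfun f p r i)"

text \<open>The matrix M at q* (with A = A_{q*}, i.e. built from S[q*]).\<close>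
definition Mmat :: "(real \<Rightarrow> real) \<Rightarrow> ('a::finite \<Rightarrow> real) \<Rightarrow> ('a \<Rightarrow> 'a \<Rightarrow> real) \<Rightarrow> real \<Rightarrow> real
    \<Rightarrow> ('a \<Rightarrow> real) \<Rightarrow> real^'a \<Rightarrow> real^'a^'a" where
  "Mmat f p d s1 s2 r qs = (\<chi> i j. qs$i * (\<Sum>x\<in>UNIV. p x * Afun f p d s1 s2 r x i * Afun f p d s1 s2 r x j
        / (\<Sum>k\<in>UNIV. qs$k * Afun f p d s1 s2 r x k)^2))"

definition Gam :: "(real \<Rightarrow> real) \<Rightarrow> ('a::finite \<Rightarrow> real) \<Rightarrow> real \<Rightarrow> real^'a \<Rightarrow> real^'a^'a" where
  "Gam f p s2 qs = (\<chi> i j. if i = j then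
      s2 * (qs$i * deriv (\<lambda>t. deriv (\<lambda>u. Df f p (\<lambda>k. if k = i then u else qs$k)) t) (qs$i))
    else 0)"

definition is_channel :: "('a::finite \<Rightarrow> 'a \<Rightarrow> real) \<Rightarrow> bool" where
  "is_channel Q \<longleftrightarrow> (\<forall>x y. 0 \<le> Q x y) \<and> (\<forall>x. (\<Sum>y\<in>UNIV. Q x y) = 1)"

definition out_marg :: "('a::finite \<Rightarrow> real) \<Rightarrow> ('a \<Rightarrow> 'a \<Rightarrow> real) \<Rightarrow> 'a \<Rightarrow> real" where
  "out_marg p Q y = (\<Sum>x\<in>UNIV. p x * Q x y)"

definition mutual_info :: "('a::finite \<Rightarrow> real) \<Rightarrow> ('a \<Rightarrow> 'a \<Rightarrow> real) \<Rightarrow> real" where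
  "mutual_info p Q = (\<Sum>x\<in>UNIV. \<Sum>y\<in>UNIV.
     (if p x * Q x y = 0 then 0 else p x * Q x y * ln (Q x y / out_marg p Q y)))"

definition exp_dist :: "('a::finite \<Rightarrow> real) \<Rightarrow> ('a \<Rightarrow> 'a \<Rightarrow> real) \<Rightarrow> ('a \<Rightarrow> 'a \<Rightarrow> real) \<Rightarrow> real" where
  "exp_dist p Q d = (\<Sum>x\<in>UNIV. \<Sum>y\<in>UNIV. p x * Q x y * d x y)"

definition rdp_feasible where
  "rdp_feasible f p d D P Q \<longleftrightarrow> is_channel Q \<and> exp_dist p Q d \<le> D \<and> Df f p (out_marg p Q) \<le> P"

definition achieves_RDPF :: "(real \<Rightarrow> real) \<Rightarrow> ('a::finite \<Rightarrow> real) \<Rightarrow> ('a \<Rightarrow> 'a \<Rightarrow> real) \<Rightarrow> ('a \<Rightarrow> real) \<Rightarrow> bool" where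
  "achieves_RDPF f p d q \<longleftrightarrow> (\<exists>D P Q. rdp_feasible f p d D P Q
      \<and> (\<forall>Q'. rdp_feasible f p d D P Q' \<longrightarrow> mutual_info p Q \<le> mutual_info p Q')
      \<and> out_marg p Q = q)"

end

theory Submission
  imports Defs
begin

(* On U the map S satisfies S q = T(q, A_{S q}), where T is the Blahut-Arimoto type update.
   Differentiating this implicit equation at the fixed point q* by the product and quotient
   rules, and using the fixed-point equations sum_x p(x) A(x,i) / Z(x) = 1 with
   Z(x) = sum_k q*(k) A(x,k), gives S' h = (I - M)(h - Gamma S' h) for every direction h; as S'
   is linear this is the claimed matrix identity.  Gamma enters because the partial derivative
   of u |-> D_f(p || q[i := u]) is g(p, u, i), so the second partial derivative of D_f is the
   derivative of the very function g through which A depends on S[q]. *)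

(* gfun f p r i depends on r only through r i, so gfun f p (\<lambda>_. u) i is g(p, -, i) evaluated
   at the scalar u. *)
lemma has_real_derivative_Df_coordinate:
  fixes p q :: "'a::finite \<Rightarrow> real"
  assumes f_diff: "f differentiable (at (p i / u))" and u: "u \<noteq> 0"
  shows "((\<lambda>u. Df f p (q(i := u))) has_real_derivative gfun f p (\<lambda>_. u) i) (at u)"
proof -
  define C where "C = (\<Sum>k\<in>UNIV - {i}. q k * f (p k / q k))"
  have Df_eq: "Df f p (q(i := v)) = v * f (p i / v) + C" for v
    unfolding Df_def C_def by (subst sum.remove[of UNIV i]) (auto intro!: sum.cong)
  have f': "(f has_real_derivative deriv f (p i / u)) (at (p i / u))"
    using f_diff by (simp add: DERIV_deriv_iff_real_differentiable)
  have "((\<lambda>v. p i / v) has_real_derivative - p i / u^2) (at u)"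
    using u by (auto intro!: derivative_eq_intros simp: power2_eq_square)
  from DERIV_chain2[OF f' this]
  have "((\<lambda>v. f (p i / v)) has_real_derivative deriv f (p i / u) * (- p i / u^2)) (at u)" .
  from DERIV_add[OF DERIV_mult[OF DERIV_ident this] DERIV_const[of C]]
  have "((\<lambda>v. v * f (p i / v) + C) has_real_derivative gfun f p (\<lambda>_. u) i) (at u)"
    using u by (simp add: gfun_def field_simps power2_eq_square)
  then show ?thesis
    by (simp add: Df_eq)
qed

lemma deriv_deriv_Df_coordinate:
  fixes p q :: "'a::finite \<Rightarrow> real"
  assumes "\<forall>t>0. f differentiable (at t)" and "0 < p i" and "0 < u"
  shows "deriv (deriv (\<lambda>u. Df f p (q(i := u)))) u = deriv (\<lambda>r. gfun f p (\<lambda>_. r) i) u"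
proof (rule deriv_cong_ev)
  have deriv_Df: "deriv (\<lambda>u. Df f p (q(i := u))) t = gfun f p (\<lambda>_. t) i" if "t > 0" for t
    using that assms by (intro DERIV_imp_deriv has_real_derivative_Df_coordinate) auto
  show "\<forall>\<^sub>F t in nhds u. deriv (\<lambda>u. Df f p (q(i := u))) t = gfun f p (\<lambda>_. t) i"
    using eventually_nhds_in_open[OF open_greaterThan \<open>0 < u\<close>[folded greaterThan_iff]]
    by (rule eventually_mono) (simp add: deriv_Df)
qed simp

lemma Gam_eq_diagonal:
  assumes "\<forall>t>0. f differentiable (at t)" and "\<forall>x. 0 < p x" and "\<forall>i. 0 < qs$i"
  shows "Gam f p s2 qs
    = (\<chi> i j. if i = j then qs$i * (s2 * deriv (\<lambda>r. gfun f p (\<lambda>_. r) i) (qs$i)) else 0)"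
proof -
  have "deriv (deriv (\<lambda>u. Df f p ((($) qs)(i := u)))) (qs$i)
      = deriv (\<lambda>r. gfun f p (\<lambda>_. r) i) (qs$i)" for i
    using assms by (intro deriv_deriv_Df_coordinate) auto
  then show ?thesis
    by (simp add: Gam_def fun_upd_def vec_eq_iff)
qed

lemma gfun_constant_differentiable:
  assumes "f differentiable (at (p i / r))" and "deriv f differentiable (at (p i / r))"
    and "r \<noteq> 0"
  shows "(\<lambda>r. gfun f p (\<lambda>_. r) i) differentiable (at r)"
proof -
  have quot: "(\<lambda>r. p i / r) differentiable (at r)"
    using \<open>r \<noteq> 0\<close> by (auto intro!: derivative_intros)
  have "(f \<circ> (\<lambda>r. p i / r)) differentiable (at r)"
    and "(deriv f \<circ> (\<lambda>r. p i / r)) differentiable (at r)"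
    using assms quot by (auto intro: differentiable_chain_at)
  with quot show ?thesis
    unfolding gfun_def o_def by (intro differentiable_diff differentiable_mult)
qed

lemma has_derivative_Afun_comp:
  fixes S :: "'b::real_normed_vector \<Rightarrow> real^'a"
  assumes S_deriv: "(S has_derivative S') (at y)"
    and "f differentiable (at (p k / S y $ k))" and "deriv f differentiable (at (p k / S y $ k))"
    and "S y $ k \<noteq> 0"
  shows "((\<lambda>z. Afun f p d s1 s2 (($) (S z)) x k) has_derivative
           (\<lambda>h. - (s2 * deriv (\<lambda>r. gfun f p (\<lambda>_. r) k) (S y $ k))
                 * Afun f p d s1 s2 (($) (S y)) x k * S' h $ k)) (at y)"
proof -
  define \<gamma> where "\<gamma> = deriv (\<lambda>r. gfun f p (\<lambda>_. r) k) (S y $ k)"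
  have g: "((\<lambda>r. gfun f p (\<lambda>_. r) k) has_real_derivative \<gamma>) (at (S y $ k))"
    unfolding \<gamma>_def DERIV_deriv_iff_real_differentiable
    using assms(2-) by (rule gfun_constant_differentiable)
  have Sk: "((\<lambda>z. S z $ k) has_derivative (\<lambda>h. S' h $ k)) (at y)"
    using bounded_linear.has_derivative[OF bounded_linear_vec_nth S_deriv] .
  have "((\<lambda>z. gfun f p (\<lambda>_. S z $ k) k) has_derivative (\<lambda>h. \<gamma> * S' h $ k)) (at y)"
    using has_derivative_compose[OF Sk g[unfolded has_field_derivative_def]] by simp
  then have "((\<lambda>z. exp (- s1 * d x k - s2 * gfun f p (\<lambda>_. S z $ k) k)) has_derivative
      (\<lambda>h. exp (- s1 * d x k - s2 * gfun f p (\<lambda>_. S y $ k) k) * (- s2 * (\<gamma> * S' h $ k)))) (at y)"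
    by (auto intro!: derivative_eq_intros)
  then show ?thesis
    by (simp add: Afun_def gfun_def \<gamma>_def algebra_simps)
qed

(* The weights A may depend on q: on U the implicit definition of S reads S q = ba_update p A q
   with A q = A_{S q}. *)
definition ba_update ::
    "('x::finite \<Rightarrow> real) \<Rightarrow> (real^'n \<Rightarrow> 'x \<Rightarrow> 'n \<Rightarrow> real) \<Rightarrow> real^'n \<Rightarrow> real^'n"
  where "ba_update w A q = (\<chi> i. q$i * (\<Sum>x\<in>UNIV. w x * A q x i / (\<Sum>k\<in>UNIV. q$k * A q x k)))"

lemma has_derivative_ba_update:
  fixes A :: "real^'n \<Rightarrow> 'x::finite \<Rightarrow> 'n \<Rightarrow> real" and q :: "real^'n"
  defines "Z \<equiv> \<lambda>x. \<Sum>k\<in>UNIV. q$k * A q x k"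
  assumes A': "\<And>x k. ((\<lambda>y. A y x k) has_derivative A' x k) (at q)"
    and Z: "\<And>x. Z x \<noteq> 0"
  shows "((\<lambda>y. ba_update w A y $ i) has_derivative
     (\<lambda>h. h$i * (\<Sum>x\<in>UNIV. w x * A q x i / Z x)
        + q$i * (\<Sum>x\<in>UNIV. w x * (A' x i h * Z x
                   - A q x i * (\<Sum>k\<in>UNIV. h$k * A q x k + q$k * A' x k h)) / (Z x)^2))) (at q)"
proof -
  have coord: "((\<lambda>y. y$k) has_derivative (\<lambda>h. h$k)) (at q)" for k
    by (rule bounded_linear_imp_has_derivative[OF bounded_linear_vec_nth])
  have norm: "((\<lambda>y. \<Sum>k\<in>UNIV. y$k * A y x k) has_derivative
      (\<lambda>h. \<Sum>k\<in>UNIV. h$k * A q x k + q$k * A' x k h)) (at q)" for x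
    by (rule has_derivative_eq_rhs, (rule derivative_intros coord A')+) (simp add: add.commute)
  have "((\<lambda>y. w x * A y x i / (\<Sum>k\<in>UNIV. y$k * A y x k)) has_derivative
      (\<lambda>h. w x * (A' x i h * Z x - A q x i * (\<Sum>k\<in>UNIV. h$k * A q x k + q$k * A' x k h))
                   / (Z x)^2)) (at q)" for x
    using has_derivative_mult_right[OF has_derivative_divide'[OF A' norm]] Z[of x]
    by (simp add: Z_def power2_eq_square times_divide_eq_right)
  from has_derivative_mult[OF coord[of i] has_derivative_sum[OF this]] show ?thesis
    unfolding ba_update_def vec_lambda_beta by (simp add: Z_def add.commute)
qed

lemma ba_update_derivative_at_fixed_point_eq:
  fixes q h v :: "real^'n" and w :: "'x::finite \<Rightarrow> real" and a :: "'x \<Rightarrow> 'n \<Rightarrow> real"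
    and b :: "'n \<Rightarrow> real"
  defines "Z \<equiv> \<lambda>x. \<Sum>k\<in>UNIV. q$k * a x k"
    and "M \<equiv> \<chi> i j. q$i * (\<Sum>x\<in>UNIV. w x * a x i * a x j / (\<Sum>k\<in>UNIV. q$k * a x k)^2)"
    and "G \<equiv> \<chi> i j. if i = j then q$i * b i else 0"
  assumes Z: "\<And>x. Z x \<noteq> 0" and fixed: "(\<Sum>x\<in>UNIV. w x * a x i / Z x) = 1"
  shows "h$i * (\<Sum>x\<in>UNIV. w x * a x i / Z x)
        + q$i * (\<Sum>x\<in>UNIV. w x * (- b i * a x i * v$i * Z x
                    - a x i * (\<Sum>k\<in>UNIV. h$k * a x k + q$k * (- b k * a x k * v$k))) / (Z x)^2)
       = ((mat 1 - M) *v (h - G *v v)) $ i"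
proof -
  define u where "u = h - G *v v"
  have u: "u$k = h$k - q$k * b k * v$k" for k
    by (simp add: u_def G_def matrix_vector_mult_def if_distrib if_distribR cong: if_cong)
  have summand: "w x * (- b i * a x i * v$i * Z x
                    - a x i * (\<Sum>k\<in>UNIV. h$k * a x k + q$k * (- b k * a x k * v$k))) / (Z x)^2
      = - b i * v$i * (w x * a x i / Z x) - (\<Sum>k\<in>UNIV. w x * a x i * a x k / (Z x)^2 * u$k)" for x
  proof -
    have "(\<Sum>k\<in>UNIV. h$k * a x k + q$k * (- b k * a x k * v$k)) = (\<Sum>k\<in>UNIV. a x k * u$k)"
      by (simp add: u algebra_simps)
    then show ?thesis
      using Z[of x] by (simp add: sum_distrib_left power2_eq_square field_simps)
  qed
  have "h$i * (\<Sum>x\<in>UNIV. w x * a x i / Z x)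
        + q$i * (\<Sum>x\<in>UNIV. w x * (- b i * a x i * v$i * Z x
                    - a x i * (\<Sum>k\<in>UNIV. h$k * a x k + q$k * (- b k * a x k * v$k))) / (Z x)^2)
      = h$i - q$i * b i * v$i - (\<Sum>k\<in>UNIV. M$i$k * u$k)"
    unfolding summand sum_subtractf sum_distrib_left[symmetric] fixed
    by (subst sum.swap) (simp add: M_def Z_def sum_distrib_left sum_distrib_right algebra_simps)
  also have "\<dots> = ((mat 1 - M) *v u) $ i"
    by (simp add: matrix_vector_mult_diff_rdistrib u) (simp add: matrix_vector_mult_def u)
  finally show ?thesis
    unfolding u_def .
qed

lemma has_derivative_ba_update_at_fixed_point:
  fixes A :: "real^'n \<Rightarrow> 'x::finite \<Rightarrow> 'n \<Rightarrow> real" and q :: "real^'n"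
    and w :: "'x \<Rightarrow> real" and L :: "real^'n \<Rightarrow> real^'n" and b :: "'n \<Rightarrow> real"
  defines "M \<equiv> \<chi> i j. q$i * (\<Sum>x\<in>UNIV. w x * A q x i * A q x j / (\<Sum>k\<in>UNIV. q$k * A q x k)^2)"
    and "G \<equiv> \<chi> i j. if i = j then q$i * b i else 0"
  assumes A': "\<And>x k. ((\<lambda>y. A y x k) has_derivative (\<lambda>h. - b k * A q x k * L h $ k)) (at q)"
    and Z: "\<And>x. (\<Sum>k\<in>UNIV. q$k * A q x k) \<noteq> 0"
    and fixed: "\<And>i. (\<Sum>x\<in>UNIV. w x * A q x i / (\<Sum>k\<in>UNIV. q$k * A q x k)) = 1"
  shows "((\<lambda>y. ba_update w A y $ i) has_derivative (\<lambda>h. ((mat 1 - M) *v (h - G *v L h)) $ i)) (at q)"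
  unfolding M_def G_def using Z
  by (intro has_derivative_eq_rhs[OF has_derivative_ba_update[OF A']] ext
      ba_update_derivative_at_fixed_point_eq fixed)

lemma matrix_eq_of_linear_implicit:
  fixes L :: "real^'n \<Rightarrow> real^'n" and M G :: "real^'n^'n"
  assumes "linear L" and "\<And>h. L h = (mat 1 - M) *v (h - G *v L h)"
  shows "matrix L = (mat 1 - M) ** (mat 1 - G ** matrix L)"
proof (rule matrix_eq[THEN iffD2], intro allI)
  fix h
  have L_eq: "matrix L *v x = L x" for x
    by (simp add: matrix_works linear_matrix_vector_mul_eq \<open>linear L\<close>)
  have "matrix L *v h = (mat 1 - M) *v (h - G *v L h)"
    unfolding L_eq by (rule assms(2))
  also have "\<dots> = ((mat 1 - M) ** (mat 1 - G ** matrix L)) *v h"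
    by (simp add: matrix_vector_mul_assoc[symmetric] matrix_vector_mult_diff_rdistrib L_eq)
  finally show "matrix L *v h = ((mat 1 - M) ** (mat 1 - G ** matrix L)) *v h" .
qed

theorem theorem5:
  fixes f :: "real \<Rightarrow> real" and p :: "'a::finite \<Rightarrow> real" and d :: "'a \<Rightarrow> 'a \<Rightarrow> real"
    and s1 s2 :: real and S :: "real^'a \<Rightarrow> real^'a" and qs :: "real^'a"
    and U :: "(real^'a) set" and S' :: "real^'a \<Rightarrow> real^'a"
  assumes f_convex: "convex_on {0<..} f" and f1: "f 1 = 0"
    and f_diff: "\<forall>t>0. f differentiable (at t)"
    and f'_diff: "\<forall>t>0. deriv f differentiable (at t)"
    and f''_cont: "continuous_on {0<..} (deriv (deriv f))"
    and p_pos: "\<forall>x. 0 < p x" and p_sum: "(\<Sum>x\<in>UNIV. p x) = 1"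
    and d_nonneg: "\<forall>x y. 0 \<le> d x y" and s1: "0 \<le> s1" and s2: "0 \<le> s2"
    and qs_pos: "\<forall>i. 0 < qs$i" and qs_sum: "(\<Sum>i\<in>UNIV. qs$i) = 1"
    and U: "open U" "qs \<in> U"
    and S_def: "\<forall>q\<in>U. \<forall>i. S q $ i = q$i * (\<Sum>x\<in>UNIV. p x * Afun f p d s1 s2 (($) (S q)) x i
                     / (\<Sum>k\<in>UNIV. q$k * Afun f p d s1 s2 (($) (S q)) x k))"
    and fixed: "S qs = qs"
    and rdpf: "achieves_RDPF f p d (($) qs)"
    and jac: "(S has_derivative S') (at qs)"
  shows "matrix S' = (mat 1 - Mmat f p d s1 s2 (($) (S qs)) qs) ** (mat 1 - Gam f p s2 qs ** matrix S')"
proof (rule matrix_eq_of_linear_implicit)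
  define \<gamma> where "\<gamma> k = deriv (\<lambda>r. gfun f p (\<lambda>_. r) k) (qs$k)" for k
  define A where "A q x k = Afun f p d s1 s2 (($) (S q)) x k" for q x k
  have A_deriv: "((\<lambda>y. A y x k) has_derivative (\<lambda>h. - (s2 * \<gamma> k) * A qs x k * S' h $ k)) (at qs)"
    for x k
    using has_derivative_Afun_comp[OF jac, of f p k] f_diff f'_diff p_pos qs_pos
    by (simp add: A_def \<gamma>_def fixed less_imp_neq[symmetric])
  have Z_pos: "0 < (\<Sum>k\<in>UNIV. qs$k * A qs x k)" for x
    using qs_pos by (intro sum_pos) (auto simp: A_def Afun_def)
  have S_eq: "S q = ba_update p A q" if "q \<in> U" for q
    using S_def that by (simp add: ba_update_def A_def vec_eq_iff)
  have normalized: "(\<Sum>x\<in>UNIV. p x * A qs x i / (\<Sum>k\<in>UNIV. qs$k * A qs x k)) = 1" for i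
    using arg_cong[OF S_eq[OF U(2)], of "\<lambda>q. q $ i"] qs_pos[rule_format, of i]
    by (simp add: fixed ba_update_def)
  have "((\<lambda>y. ba_update p A y $ i) has_derivative
      (\<lambda>h. ((mat 1 - Mmat f p d s1 s2 (($) (S qs)) qs) *v (h - Gam f p s2 qs *v S' h)) $ i)) (at qs)" for i
    unfolding Gam_eq_diagonal[OF f_diff p_pos qs_pos, folded \<gamma>_def] Mmat_def A_def[symmetric]
    using Z_pos normalized
    by (intro has_derivative_ba_update_at_fixed_point[where b = "\<lambda>k. s2 * \<gamma> k", OF A_deriv])
       (auto simp: less_imp_neq[symmetric] mult.assoc)
  then have "((\<lambda>y. S y $ i) has_derivative
      (\<lambda>h. ((mat 1 - Mmat f p d s1 s2 (($) (S qs)) qs) *v (h - Gam f p s2 qs *v S' h)) $ i)) (at qs)" for i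
    by (rule has_derivative_transform_within_open[OF _ U]) (simp add: S_eq)
  from has_derivative_unique[OF bounded_linear.has_derivative[OF bounded_linear_vec_nth jac] this]
  show "S' h = (mat 1 - Mmat f p d s1 s2 (($) (S qs)) qs) *v (h - Gam f p s2 qs *v S' h)" for h
    by (simp add: vec_eq_iff fun_eq_iff)
  show "linear S'"
    using jac by (rule has_derivative_linear)
qed

end
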